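(* Let $g$, $\mathbf{g}=g^{\oplus n}$ be as in the context, and let $\mathbf{A},\mathbf{B},\mathbf{C},\mathbf{D}$ be linear operators on $\mathbf{g}$ with components $A_{ij},B_{ij},C_{ij},D_{ij}$ such that $A_{ij}^*=-A_{ji}$, $D_{ij}^*=-D_{ji}$, $B_{ij}^*=C_{ji}$ and such that PB$(\mathbf{A},\mathbf{B},\mathbf{C},\mathbf{D})$ is a Poisson bracket on $\mathbf{g}$. Suppose that (i) $A_{i+1,j+1}-D_{i,j}+B_{i+1,j}-C_{i,j+1}=0$ for $1\le i,j\le n-1$; (ii) $A_{1,j+1}+B_{1,j}=0$ (equivalently $A_{j+1,1}-C_{j,1}=0$) for $1\le j\le n-1$; (iii) $D_{n,j}+C_{n,j+1}=0$ (equivalently $D_{j,n}-B_{j+1,n}=0$) for $1\le j\le n-1$. Define $\mathcal{M}:\mathbf{g}\to g$ by $\mathcal{M}(u_1,\dots,u_n)=u_n\cdot u_{n-1}\cdots u_1$. Then $\mathcal{M}$ is a Poisson map when $g$ is equipped with the bracket PB$(A_{11},B_{1n},C_{n1},D_{nn})$; that is, for all smooth functions $\varphi,\psi$ on $g$, $\{\varphi\circ\mathcal{M},\psi\circ\mathcal{M}\}_{\mathbf{g}}=\{\varphi,\psi\}_{g}\circ\mathcal{M}$, where $\{\cdot,\cdot\}_{\mathbf{g}}$ is PB$(\mathbf{A},\mathbf{B},\mathbf{C},\mathbf{D})$ and $\{\cdot,\cdot\}_g$ is PB$(A_{11},B_{1n},C_{n1},D_{nn})$.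
   Context: $g$ is an associative algebra with a nondegenerate symmetric bilinear form $\langle\cdot,\cdot\rangle$ with $\langle uv,w\rangle=\langle u,vw\rangle$; $X^*$ denotes the adjoint of a linear operator $X$ on $g$. For smooth $\varphi$ on $g$, $\nabla\varphi(u)\in g$ is defined by $\langle\nabla\varphi(u),X\rangle=\frac{d}{d\varepsilon}\varphi(u+\varepsilon X)|_{\varepsilon=0}$ for all $X$, and $d\varphi(u)=u\cdot\nabla\varphi(u)$, $d'\varphi(u)=\nabla\varphi(u)\cdot u$. For linear operators $A,B,C,D$ on $g$, PB$(A,B,C,D)$ is the bracket $\{\varphi,\psi\}(u)=\langle A(d'\varphi),d'\psi\rangle-\langle D(d\varphi),d\psi\rangle+\langle B(d\varphi),d'\psi\rangle-\langle C(d'\varphi),d\psi\rangle$. $\mathbf{g}=g\oplus\cdots\oplus g$ ($n$ copies) has componentwise multiplication and form $\langle\langle\mathbf{u},\mathbf{v}\rangle\rangle=\sum_k\langle u_k,v_k\rangle$. A linear operator $\mathbf{A}$ on $\mathbf{g}$ has components $A_{ij}$ defined by $(\mathbf{A}(\mathbf{u}))_i=\sum_j A_{ij}(u_j)$ (similarly for $\mathbf{B},\mathbf{C},\mathbf{D}$). For smooth $\Phi$ on $\mathbf{g}$, $\nabla_j\Phi$ is the $j$-th component of its gradient with respect to $\langle\langle\cdot,\cdot\rangle\rangle$, $d_j\Phi=u_j\nabla_j\Phi$, $d'_j\Phi=\nabla_j\Phi\, u_j$, and PB$(\mathbf{A},\mathbf{B},\mathbf{C},\mathbf{D})$ is $\{\Phi,\Psi\}(\mathbf{u})=\sum_{i,j}\big(\langle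 A_{ij}(d'_j\Phi),d'_i\Psi\rangle-\langle D_{ij}(d_j\Phi),d_i\Psi\rangle+\langle B_{ij}(d_j\Phi),d'_i\Psi\rangle-\langle C_{ij}(d'_j\Phi),d_i\Psi\rangle\big)$. *)

theory Defs
  imports "HOL-Analysis.Analysis"
begin

fun Ck :: "nat \<Rightarrow> ('v::euclidean_space \<Rightarrow> 'w::euclidean_space) \<Rightarrow> bool" where
  "Ck 0 f = continuous_on UNIV f"
| "Ck (Suc k) f = ((\<forall>x. f differentiable (at x)) \<and>
      (\<forall>b\<in>Basis. Ck k (\<lambda>x. frechet_derivative f (at x) b)))"

definition smooth :: "('v::euclidean_space \<Rightarrow> 'w::euclidean_space) \<Rightarrow> bool" where
  "smooth f \<longleftrightarrow> (\<forall>k. Ck k f)"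

definition assoc_algebra_with_form ::
  "('a::real_vector \<Rightarrow> 'a \<Rightarrow> 'a) \<Rightarrow> ('a \<Rightarrow> 'a \<Rightarrow> real) \<Rightarrow> bool" where
  "assoc_algebra_with_form mul F \<longleftrightarrow>
     bilinear mul \<and> (\<forall>x y z. mul (mul x y) z = mul x (mul y z)) \<and>
     bilinear F \<and> (\<forall>u v. F u v = F v u) \<and>
     (\<forall>u. (\<forall>v. F u v = 0) \<longrightarrow> u = 0) \<and>
     (\<forall>u v w. F (mul u v) w = F u (mul v w))"

definition adj :: "('a \<Rightarrow> 'a \<Rightarrow> real) \<Rightarrow> ('a \<Rightarrow> 'a) \<Rightarrow> ('a \<Rightarrow> 'a)" where
  "adj F X = (THE Y. \<forall>u v. F (X u) v = F u (Y v))"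

definition grad :: "('v \<Rightarrow> 'v \<Rightarrow> real) \<Rightarrow> ('v::real_normed_vector \<Rightarrow> real) \<Rightarrow> 'v \<Rightarrow> 'v" where
  "grad F \<phi> u = (THE w. \<forall>X. F w X = frechet_derivative \<phi> (at u) X)"

definition dL :: "('a \<Rightarrow> 'a \<Rightarrow> 'a) \<Rightarrow> ('a \<Rightarrow> 'a \<Rightarrow> real) \<Rightarrow> ('a::real_normed_vector \<Rightarrow> real) \<Rightarrow> 'a \<Rightarrow> 'a" where
  "dL mul F \<phi> u = mul u (grad F \<phi> u)"

definition dR :: "('a \<Rightarrow> 'a \<Rightarrow> 'a) \<Rightarrow> ('a \<Rightarrow> 'a \<Rightarrow> real) \<Rightarrow> ('a::real_normed_vector \<Rightarrow> real) \<Rightarrow> 'a \<Rightarrow> 'a" where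
  "dR mul F \<phi> u = mul (grad F \<phi> u) u"

definition PB :: "('a \<Rightarrow> 'a \<Rightarrow> 'a) \<Rightarrow> ('a \<Rightarrow> 'a \<Rightarrow> real) \<Rightarrow>
   ('a \<Rightarrow> 'a) \<Rightarrow> ('a \<Rightarrow> 'a) \<Rightarrow> ('a \<Rightarrow> 'a) \<Rightarrow> ('a \<Rightarrow> 'a) \<Rightarrow>
   ('a::real_normed_vector \<Rightarrow> real) \<Rightarrow> ('a \<Rightarrow> real) \<Rightarrow> 'a \<Rightarrow> real" where
  "PB mul F A B C D \<phi> \<psi> u =
     F (A (dR mul F \<phi> u)) (dR mul F \<psi> u) - F (D (dL mul F \<phi> u)) (dL mul F \<psi> u)
   + F (B (dL mul F \<phi> u)) (dR mul F \<psi> u) - F (C (dR mul F \<phi> u)) (dL mul F \<psi> u)"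

definition formN :: "('a \<Rightarrow> 'a \<Rightarrow> real) \<Rightarrow> 'a^'n::finite \<Rightarrow> 'a^'n \<Rightarrow> real" where
  "formN F u v = (\<Sum>k\<in>UNIV. F (u $ k) (v $ k))"

definition inj_comp :: "'n::finite \<Rightarrow> 'a::zero \<Rightarrow> 'a^'n" where
  "inj_comp j x = (\<chi> k. if k = j then x else 0)"

text \<open>Components A_ij of an operator on g^n: (A u)_i = sum_j A_ij (u_j).\<close>
definition comp :: "('a^'n \<Rightarrow> 'a^'n) \<Rightarrow> 'n::finite \<Rightarrow> 'n \<Rightarrow> 'a::zero \<Rightarrow> 'a" where
  "comp A i j x = A (inj_comp j x) $ i"

definition gradN :: "('a \<Rightarrow> 'a \<Rightarrow> real) \<Rightarrow> ('a::euclidean_space^'n::finite \<Rightarrow> real) \<Rightarrow> 'a^'n \<Rightarrow> 'n \<Rightarrow> 'a" where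
  "gradN F \<Phi> u j = grad (formN F) \<Phi> u $ j"

definition dLN :: "('a \<Rightarrow> 'a \<Rightarrow> 'a) \<Rightarrow> ('a \<Rightarrow> 'a \<Rightarrow> real) \<Rightarrow> ('a::euclidean_space^'n::finite \<Rightarrow> real) \<Rightarrow> 'a^'n \<Rightarrow> 'n \<Rightarrow> 'a" where
  "dLN mul F \<Phi> u j = mul (u $ j) (gradN F \<Phi> u j)"

definition dRN :: "('a \<Rightarrow> 'a \<Rightarrow> 'a) \<Rightarrow> ('a \<Rightarrow> 'a \<Rightarrow> real) \<Rightarrow> ('a::euclidean_space^'n::finite \<Rightarrow> real) \<Rightarrow> 'a^'n \<Rightarrow> 'n \<Rightarrow> 'a" where
  "dRN mul F \<Phi> u j = mul (gradN F \<Phi> u j) (u $ j)"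

definition PBN :: "('a \<Rightarrow> 'a \<Rightarrow> 'a) \<Rightarrow> ('a \<Rightarrow> 'a \<Rightarrow> real) \<Rightarrow>
   ('a^'n \<Rightarrow> 'a^'n) \<Rightarrow> ('a^'n \<Rightarrow> 'a^'n) \<Rightarrow> ('a^'n \<Rightarrow> 'a^'n) \<Rightarrow> ('a^'n \<Rightarrow> 'a^'n) \<Rightarrow>
   ('a::euclidean_space^'n::finite \<Rightarrow> real) \<Rightarrow> ('a^'n \<Rightarrow> real) \<Rightarrow> 'a^'n \<Rightarrow> real" where
  "PBN mul F A B C D \<Phi> \<Psi> u =
     (\<Sum>i\<in>UNIV. \<Sum>j\<in>UNIV.
         F (comp A i j (dRN mul F \<Phi> u j)) (dRN mul F \<Psi> u i)
       - F (comp D i j (dLN mul F \<Phi> u j)) (dLN mul F \<Psi> u i)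
       + F (comp B i j (dLN mul F \<Phi> u j)) (dRN mul F \<Psi> u i)
       - F (comp C i j (dRN mul F \<Phi> u j)) (dLN mul F \<Psi> u i))"

definition poisson_bracket :: "(('v::euclidean_space \<Rightarrow> real) \<Rightarrow> ('v \<Rightarrow> real) \<Rightarrow> 'v \<Rightarrow> real) \<Rightarrow> bool" where
  "poisson_bracket P \<longleftrightarrow>
     (\<forall>\<phi> \<psi> \<theta>. smooth \<phi> \<and> smooth \<psi> \<and> smooth \<theta> \<longrightarrow>
        smooth (P \<phi> \<psi>) \<and>
        (\<forall>a b. P (\<lambda>u. a * \<phi> u + b * \<psi> u) \<theta> = (\<lambda>u. a * P \<phi> \<theta> u + b * P \<psi> \<theta> u)) \<and>
        P \<phi> \<psi> = (\<lambda>u. - P \<psi> \<phi> u) \<and>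
        P (\<lambda>u. \<phi> u * \<psi> u) \<theta> = (\<lambda>u. \<phi> u * P \<psi> \<theta> u + \<psi> u * P \<phi> \<theta> u) \<and>
        (\<lambda>u. P \<phi> (P \<psi> \<theta>) u + P \<psi> (P \<theta> \<phi>) u + P \<theta> (P \<phi> \<psi>) u) = (\<lambda>u. 0))"

fun rprod :: "('a \<Rightarrow> 'a \<Rightarrow> 'a) \<Rightarrow> (nat \<Rightarrow> 'a) \<Rightarrow> nat \<Rightarrow> 'a" where
  "rprod mul f 0 = undefined"
| "rprod mul f (Suc 0) = f 1"
| "rprod mul f (Suc (Suc k)) = mul (f (Suc (Suc k))) (rprod mul f (Suc k))"

end

theory Submission
  imports Defs
begin

(*
  Let M(u) = u\<^sub>n \<cdots> u\<^sub>1, \<Phi> = \<phi> \<circ> M and g = \<nabla>\<phi>(M(u)). By the chain rule and the invariance of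
  the form, \<nabla>\<^sub>j\<Phi>(u) = u\<^sub>j\<^sub>-\<^sub>1 \<cdots> u\<^sub>1 g u\<^sub>n \<cdots> u\<^sub>j\<^sub>+\<^sub>1, hence d\<^sub>j\<Phi> = z\<^sub>j and d'\<^sub>j\<Phi> = z\<^sub>j\<^sub>-\<^sub>1 for the cyclic
  rearrangements z\<^sub>k = u\<^sub>k \<cdots> u\<^sub>1 g u\<^sub>n \<cdots> u\<^sub>k\<^sub>+\<^sub>1, while d\<phi>(M(u)) = z\<^sub>n and d'\<phi>(M(u)) = z\<^sub>0;
  w\<^sub>k is defined likewise for \<psi>. The bracket of \<Phi> and \<psi> \<circ> M is therefore the sum over i of
  \<langle>R\<^sub>i, w\<^sub>i\<^sub>-\<^sub>1\<rangle> - \<langle>S\<^sub>i, w\<^sub>i\<rangle>, where R\<^sub>i = \<Sum>\<^sub>j A\<^sub>i\<^sub>j z\<^sub>j\<^sub>-\<^sub>1 + B\<^sub>i\<^sub>j z\<^sub>j and S\<^sub>i = \<Sum>\<^sub>j C\<^sub>i\<^sub>j z\<^sub>j\<^sub>-\<^sub>1 + D\<^sub>i\<^sub>j z\<^sub>j.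
  Condition (i) together with the adjoint forms of (ii) and (iii) gives R\<^sub>i\<^sub>+\<^sub>1 = S\<^sub>i, so the sum
  telescopes to \<langle>R\<^sub>1, w\<^sub>0\<rangle> - \<langle>S\<^sub>n, w\<^sub>n\<rangle>, and (ii), (iii) themselves reduce R\<^sub>1 and S\<^sub>n to
  A\<^sub>1\<^sub>1 z\<^sub>0 + B\<^sub>1\<^sub>n z\<^sub>n and C\<^sub>n\<^sub>1 z\<^sub>0 + D\<^sub>n\<^sub>n z\<^sub>n: this is PB(A\<^sub>1\<^sub>1, B\<^sub>1\<^sub>n, C\<^sub>n\<^sub>1, D\<^sub>n\<^sub>n)(\<phi>, \<psi>) at M(u).
*)

definition nondegenerate :: "('v::zero \<Rightarrow> 'v \<Rightarrow> real) \<Rightarrow> bool" where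
  "nondegenerate F \<longleftrightarrow> (\<forall>u. (\<forall>v. F u v = 0) \<longrightarrow> u = 0)"

lemma bilinear_form_eqI:
  assumes "bilinear F" "nondegenerate F" "\<And>v. F x v = F y v"
  shows "x = y"
  using assms bilinear_lsub[OF assms(1), of x y] unfolding nondegenerate_def
  by (metis right_minus_eq)

lemma nondegenerate_bilinear_form_represents:
  fixes F :: "'a::euclidean_space \<Rightarrow> 'a \<Rightarrow> real"
  assumes F: "bilinear F" "nondegenerate F" and l: "linear l"
  shows "\<exists>g. \<forall>X. F g X = l X"
proof -
  have linL: "linear (\<lambda>x. F x y)" and linR: "linear (\<lambda>y. F x y)" for x y
    using F(1) unfolding bilinear_def by auto
  define T where "T g = (\<Sum>b\<in>Basis. F g b *\<^sub>R b)" for g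
  have T_inner: "T g \<bullet> b = F g b" if "b \<in> Basis" for g b
    using that unfolding T_def
    by (simp add: inner_sum_left inner_Basis if_distrib sum.delta cong: if_cong)
  have "linear T"
    unfolding T_def
    by (rule linearI) (simp_all add: linear_add[OF linL] linear_scale[OF linL]
        scaleR_add_left sum.distrib scaleR_sum_right)
  moreover have "inj T"
  proof (rule linear_injective_0[OF \<open>linear T\<close>, THEN iffD2], intro allI impI)
    fix g assume "T g = 0"
    then have "(\<lambda>X. F g X) = (\<lambda>X. 0)"
      by (intro linear_eq_stdbasis[OF linR bounded_linear.linear[OF bounded_linear_zero]])
        (auto simp flip: T_inner)
    then show "g = 0"
      using F(2) unfolding nondegenerate_def by metis
  qed
  ultimately obtain g where g: "T g = (\<Sum>b\<in>Basis. l b *\<^sub>R b)"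
    using linear_injective_imp_surjective by (metis surjD)
  have "(\<lambda>X. F g X) = l"
    by (intro linear_eq_stdbasis[OF linR l])
      (simp add: T_inner[symmetric] g inner_sum_left inner_Basis if_distrib sum.delta cong: if_cong)
  then show ?thesis by metis
qed

lemma grad_eqI:
  assumes "bilinear F" "nondegenerate F" "\<And>X. F w X = frechet_derivative f (at x) X"
  shows "grad F f x = w"
  unfolding grad_def
  using assms bilinear_form_eqI[OF assms(1,2)] by (intro the_equality) auto

lemma grad_represents_derivative:
  fixes F :: "'a::euclidean_space \<Rightarrow> 'a \<Rightarrow> real"
  assumes F: "bilinear F" "nondegenerate F" and f: "f differentiable (at x)"
  shows "F (grad F f x) X = frechet_derivative f (at x) X"
proof -
  have "linear (frechet_derivative f (at x))"
    using f frechet_derivative_works has_derivative_linear by blast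
  then obtain w where "\<forall>X. F w X = frechet_derivative f (at x) X"
    using nondegenerate_bilinear_form_represents[OF F] by blast
  then show ?thesis
    using grad_eqI[OF F] by metis
qed

lemma adj_eqI:
  assumes F: "bilinear F" "nondegenerate F" "\<And>u v. F u v = F v u"
    and XY: "\<And>u v. F (X u) v = F u (Y v)"
  shows "adj F X = Y"
  unfolding adj_def
proof (rule the_equality)
  fix Y' assume "\<forall>u v. F (X u) v = F u (Y' v)"
  show "Y' = Y"
  proof
    fix v
    show "Y' v = Y v"
      by (rule bilinear_form_eqI[OF F(1,2)]) (metis XY F(3) \<open>\<forall>u v. F (X u) v = F u (Y' v)\<close>)
  qed
qed (use XY in blast)

lemma adj_represents:
  fixes F :: "'a::euclidean_space \<Rightarrow> 'a \<Rightarrow> real"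
  assumes F: "bilinear F" "nondegenerate F" "\<And>u v. F u v = F v u" and X: "linear X"
  shows "F (X u) v = F u (adj F X v)"
proof -
  have "linear (\<lambda>u. F (X u) v)" for v
    using linear_compose[OF X, of "\<lambda>x. F x v"] F(1) unfolding bilinear_def o_def by blast
  then have "\<exists>g. \<forall>u. F g u = F (X u) v" for v
    using nondegenerate_bilinear_form_represents[OF F(1,2)] by blast
  then obtain Y where Y: "\<And>v u. F (Y v) u = F (X u) v"
    by metis
  then have "adj F X = Y"
    by (intro adj_eqI[OF F]) (simp add: F(3))
  then show ?thesis
    using Y F(3) by metis
qed

lemma adj_eq_neg_adj:
  fixes F :: "'a::euclidean_space \<Rightarrow> 'a \<Rightarrow> real"
  assumes F: "bilinear F" "nondegenerate F" "\<And>u v. F u v = F v u" and X: "linear X"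
    and YX: "\<And>x. Y x + X x = 0"
  shows "adj F Y = (\<lambda>x. - adj F X x)"
proof -
  have "Y = (\<lambda>x. - X x)"
    using YX by (simp add: fun_eq_iff eq_neg_iff_add_eq_0)
  then show ?thesis
    using F adj_represents[OF F X] by (intro adj_eqI) (simp_all add: bilinear_lneg bilinear_rneg)
qed

lemma adj_adj:
  fixes F :: "'a::euclidean_space \<Rightarrow> 'a \<Rightarrow> real"
  assumes F: "bilinear F" "nondegenerate F" "\<And>u v. F u v = F v u" and X: "linear X"
  shows "adj F (adj F X) = X"
  using F adj_represents[OF F X] by (intro adj_eqI) metis+

fun rprod_deriv :: "('a::real_vector \<Rightarrow> 'a \<Rightarrow> 'a) \<Rightarrow> (nat \<Rightarrow> 'a) \<Rightarrow> (nat \<Rightarrow> 'a) \<Rightarrow> nat \<Rightarrow> 'a" where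
  "rprod_deriv mul x h 0 = 0"
| "rprod_deriv mul x h (Suc 0) = h 1"
| "rprod_deriv mul x h (Suc (Suc k)) =
     mul (x (Suc (Suc k))) (rprod_deriv mul x h (Suc k))
   + mul (h (Suc (Suc k))) (rprod mul x (Suc k))"

lemma has_derivative_rprod:
  assumes mul: "bounded_bilinear mul" and m: "m \<ge> 1"
    and f: "\<And>k. (f k has_derivative f' k) (at u within S)"
  shows "((\<lambda>u. rprod mul (\<lambda>k. f k u) m) has_derivative
           (\<lambda>v. rprod_deriv mul (\<lambda>k. f k u) (\<lambda>k. f' k v) m)) (at u within S)"
  using m
proof (induction m rule: nat_induct_at_least)
  case (Suc m)
  then obtain k where "m = Suc k"
    using not0_implies_Suc by fastforce
  then show ?case
    using bounded_bilinear.FDERIV[OF mul f Suc.IH] by simp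
qed (simp add: f)

(* rprod_cofactor mul x m g k = x\<^sub>k\<^sub>-\<^sub>1 \<cdots> x\<^sub>1 g x\<^sub>m \<cdots> x\<^sub>k\<^sub>+\<^sub>1  for 1 \<le> k \<le> m *)
fun rprod_cofactor :: "('a \<Rightarrow> 'a \<Rightarrow> 'a) \<Rightarrow> (nat \<Rightarrow> 'a) \<Rightarrow> nat \<Rightarrow> 'a \<Rightarrow> nat \<Rightarrow> 'a" where
  "rprod_cofactor mul x 0 g k = g"
| "rprod_cofactor mul x (Suc 0) g k = g"
| "rprod_cofactor mul x (Suc (Suc m)) g k =
    (if k = Suc (Suc m) then mul (rprod mul x (Suc m)) g
     else rprod_cofactor mul x (Suc m) (mul g (x (Suc (Suc m)))) k)"

(* rprod_rotation mul x m g k = x\<^sub>k \<cdots> x\<^sub>1 g x\<^sub>m \<cdots> x\<^sub>k\<^sub>+\<^sub>1  for 0 \<le> k \<le> m *)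
definition rprod_rotation :: "('a \<Rightarrow> 'a \<Rightarrow> 'a) \<Rightarrow> (nat \<Rightarrow> 'a) \<Rightarrow> nat \<Rightarrow> 'a \<Rightarrow> nat \<Rightarrow> 'a" where
  "rprod_rotation mul x m g k =
     (if k = 0 then mul g (rprod mul x m) else mul (x k) (rprod_cofactor mul x m g k))"

context
  fixes mul :: "'a \<Rightarrow> 'a \<Rightarrow> 'a"
  assumes mul_assoc: "\<And>x y z. mul (mul x y) z = mul x (mul y z)"
begin

lemma rprod_rotation_last:
  assumes "m \<ge> 1"
  shows "rprod_rotation mul x m g m = mul (rprod mul x m) g"
proof -
  obtain k where "m = Suc k"
    using assms not0_implies_Suc by fastforce
  then show ?thesis
    by (cases k) (simp_all add: rprod_rotation_def mul_assoc)
qed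

lemma rprod_rotation_Suc:
  "k < Suc (Suc m) \<Longrightarrow>
   rprod_rotation mul x (Suc (Suc m)) g k
     = rprod_rotation mul x (Suc m) (mul g (x (Suc (Suc m)))) k"
  by (simp add: rprod_rotation_def mul_assoc)

lemma mul_rprod_cofactor:
  assumes "1 \<le> k" "k \<le> m"
  shows "mul (rprod_cofactor mul x m g k) (x k) = rprod_rotation mul x m g (k - 1)"
  using order_trans[OF assms] assms
proof (induction m arbitrary: g rule: nat_induct_at_least)
  case (Suc m')
  then obtain m where m': "m' = Suc m"
    using not0_implies_Suc by fastforce
  show ?case
  proof (cases "k = Suc (Suc m)")
    case True
    then show ?thesis
      using rprod_rotation_last[of "Suc m"] rprod_rotation_Suc[of "Suc m" m] m'
      by (simp add: mul_assoc)
  next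
    case False
    then show ?thesis
      using Suc.IH[of "mul g (x (Suc (Suc m)))"] Suc.prems rprod_rotation_Suc[of "k - 1" m] m'
      by simp
  qed
qed (auto simp: rprod_rotation_def)

end

lemma sum_shift_pairs:
  fixes P Q :: "nat \<Rightarrow> 'a::comm_monoid_add"
  shows "(\<Sum>j=1..Suc m. P (j - 1) + Q j) = P 0 + (\<Sum>j=1..m. P j + Q j) + Q (Suc m)"
  by (induction m) (simp_all add: sum.cl_ivl_Suc ac_simps)

lemma bracket_double_sum_telescopes:
  fixes F :: "'a::real_vector \<Rightarrow> 'a \<Rightarrow> real"
    and a b c d :: "nat \<Rightarrow> nat \<Rightarrow> 'a \<Rightarrow> 'a" and z w :: "nat \<Rightarrow> 'a"
  assumes F: "bilinear F" and n: "n \<ge> 1"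
    and cond_i: "\<forall>i\<in>{1..n-1}. \<forall>j\<in>{1..n-1}. \<forall>x.
        a (i+1) (j+1) x - d i j x + b (i+1) j x - c i (j+1) x = 0"
    and cond_ii: "\<forall>j\<in>{1..n-1}. \<forall>x. a 1 (j+1) x + b 1 j x = 0"
    and cond_ii': "\<forall>j\<in>{1..n-1}. \<forall>x. a (j+1) 1 x = c j 1 x"
    and cond_iii: "\<forall>j\<in>{1..n-1}. \<forall>x. d n j x + c n (j+1) x = 0"
    and cond_iii': "\<forall>j\<in>{1..n-1}. \<forall>x. b (j+1) n x = d j n x"
  shows "(\<Sum>i=1..n. \<Sum>j=1..n.
            F (a i j (z (j-1))) (w (i-1)) - F (d i j (z j)) (w i)
          + F (b i j (z j)) (w (i-1)) - F (c i j (z (j-1))) (w i))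
       = F (a 1 1 (z 0)) (w 0) - F (d n n (z n)) (w n)
          + F (b 1 n (z n)) (w 0) - F (c n 1 (z 0)) (w n)"
proof -
  obtain m where m: "n = Suc m"
    using n not0_implies_Suc by fastforce
  define R where "R i = (\<Sum>j=1..n. a i j (z (j-1)) + b i j (z j))" for i
  define S where "S i = (\<Sum>j=1..n. c i j (z (j-1)) + d i j (z j))" for i
  have R_split: "R i = a i 1 (z 0) + (\<Sum>j=1..m. a i (Suc j) (z j) + b i j (z j)) + b i n (z n)" for i
  proof -
    have "R i = (\<Sum>j=1..Suc m. a i (Suc (j - 1)) (z (j - 1)) + b i j (z j))"
      unfolding R_def m by (intro sum.cong) auto
    then show ?thesis
      using sum_shift_pairs[of "\<lambda>j. a i (Suc j) (z j)" "\<lambda>j. b i j (z j)" m] m by simp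
  qed
  have S_split: "S i = c i 1 (z 0) + (\<Sum>j=1..m. c i (Suc j) (z j) + d i j (z j)) + d i n (z n)" for i
  proof -
    have "S i = (\<Sum>j=1..Suc m. c i (Suc (j - 1)) (z (j - 1)) + d i j (z j))"
      unfolding S_def m by (intro sum.cong) auto
    then show ?thesis
      using sum_shift_pairs[of "\<lambda>j. c i (Suc j) (z j)" "\<lambda>j. d i j (z j)" m] m by simp
  qed
  have R_Suc: "R (Suc i) = S i" if "i \<in> {1..m}" for i
  proof -
    have "a (Suc i) (Suc j) x + b (Suc i) j x = c i (Suc j) x + d i j x" if "j \<in> {1..m}" for j x
      using cond_i \<open>i \<in> {1..m}\<close> that m by (fastforce simp: algebra_simps)
    then show ?thesis
      unfolding R_split S_split using cond_ii' cond_iii' that m by simp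
  qed
  have R_first: "R 1 = a 1 1 (z 0) + b 1 n (z n)"
    unfolding R_split using cond_ii m by simp
  have S_last: "S n = c n 1 (z 0) + d n n (z n)"
    unfolding S_split using cond_iii m by (simp add: add.commute)
  define T where "T i = (if i = 0 then F (R 1) (w 0) else F (S i) (w i))" for i
  have linL: "linear (\<lambda>x. F x v)" for v
    using F unfolding bilinear_def by blast
  have "(\<Sum>i=1..n. \<Sum>j=1..n.
            F (a i j (z (j-1))) (w (i-1)) - F (d i j (z j)) (w i)
          + F (b i j (z j)) (w (i-1)) - F (c i j (z (j-1))) (w i))
      = (\<Sum>i=1..n. F (R i) (w (i-1)) - F (S i) (w i))"
    unfolding R_def S_def
    by (simp add: linear_sum[OF linL] bilinear_ladd[OF F] sum_subtractf sum.distrib algebra_simps)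
  also have "\<dots> = (\<Sum>i=1..n. T (i - 1) - T i)"
  proof (intro sum.cong refl)
    fix i assume i: "i \<in> {1..n}"
    show "F (R i) (w (i-1)) - F (S i) (w i) = T (i - 1) - T i"
    proof (cases "i = 1")
      case False
      then have "i - 1 \<in> {1..m}"
        using i m by auto
      then have "R i = S (i - 1)"
        using R_Suc i by fastforce
      then show ?thesis
        using False i by (simp add: T_def)
    qed (simp add: T_def)
  qed
  also have "\<dots> = T 0 - T n"
    using sum_telescope''[of 0 n T] by (simp add: sum_subtractf)
  finally show ?thesis
    using n unfolding T_def R_first S_last by (simp add: bilinear_ladd[OF F])
qed

lemma linear_comp:
  fixes A :: "'a::real_vector^'n::finite \<Rightarrow> 'a^'n"
  assumes "linear A"
  shows "linear (comp A i j)"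
proof -
  have "linear (inj_comp j :: 'a \<Rightarrow> 'a^'n)"
    by (rule linearI) (simp_all add: inj_comp_def vec_eq_iff)
  then show ?thesis
    unfolding comp_def using assms
    by (intro linearI) (simp_all add: linear_add linear_scale)
qed

lemma bilinear_formN:
  assumes "bilinear F"
  shows "bilinear (formN F :: 'a::real_vector^'n::finite \<Rightarrow> _)"
  unfolding bilinear_def formN_def
  by (auto intro!: linearI simp: bilinear_ladd[OF assms] bilinear_radd[OF assms]
      bilinear_lmul[OF assms] bilinear_rmul[OF assms] sum.distrib sum_distrib_left)

lemma nondegenerate_formN:
  assumes F: "bilinear F" "nondegenerate F"
  shows "nondegenerate (formN F :: 'a::real_vector^'n::finite \<Rightarrow> _)"
  unfolding nondegenerate_def
proof (intro allI impI)
  fix w :: "'a^'n"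
  assume w: "\<forall>v. formN F w v = 0"
  have "formN F w (inj_comp j y) = F (w $ j) y" for j y
    unfolding formN_def inj_comp_def by (simp add: bilinear_rzero[OF F(1)] if_distrib cong: if_cong)
  then have "w $ j = 0" for j
    using w F(2) unfolding nondegenerate_def by metis
  then show "w = 0"
    by (simp add: vec_eq_iff)
qed

locale invariant_form_algebra =
  fixes mul :: "'a::euclidean_space \<Rightarrow> 'a \<Rightarrow> 'a" and F :: "'a \<Rightarrow> 'a \<Rightarrow> real"
  assumes assoc_algebra_with_form: "assoc_algebra_with_form mul F"
begin

lemma bilinear_mul: "bilinear mul"
  and mul_assoc: "mul (mul x y) z = mul x (mul y z)"
  and bilinear_form: "bilinear F"
  and form_commute: "F u v = F v u"
  and nondegenerate_form: "nondegenerate F"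
  and form_invariant: "F (mul u v) w = F u (mul v w)"
  using assoc_algebra_with_form unfolding assoc_algebra_with_form_def nondegenerate_def by auto

lemma form_rprod_deriv:
  assumes "m \<ge> 1"
  shows "F g (rprod_deriv mul x h m) = (\<Sum>k=1..m. F (rprod_cofactor mul x m g k) (h k))"
  using assms
proof (induction m arbitrary: g rule: nat_induct_at_least)
  case (Suc m')
  then obtain m where m': "m' = Suc m"
    using not0_implies_Suc by fastforce
  let ?x = "x (Suc (Suc m))" and ?h = "h (Suc (Suc m))" and ?P = "rprod mul x (Suc m)"
  have "F g (mul ?h ?P) = F (mul ?P g) ?h"
    by (metis form_commute form_invariant)
  then have "F g (rprod_deriv mul x h (Suc (Suc m)))
      = F (mul g ?x) (rprod_deriv mul x h (Suc m)) + F (mul ?P g) ?h"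
    by (simp add: bilinear_radd[OF bilinear_form] form_invariant)
  then show ?case
    using Suc.IH[of "mul g ?x"] m' by (simp add: sum.cl_ivl_Suc)
qed simp

lemma gradN_comp_rprod:
  fixes idx :: "nat \<Rightarrow> 'n::finite"
  assumes idx: "bij_betw idx {1..n} UNIV"
    and \<phi>: "\<phi> differentiable (at (rprod mul (\<lambda>k. u $ idx k) n))"
    and k: "k \<in> {1..n}"
  shows "gradN F (\<lambda>u. \<phi> (rprod mul (\<lambda>k. u $ idx k) n)) u (idx k)
       = rprod_cofactor mul (\<lambda>k. u $ idx k) n (grad F \<phi> (rprod mul (\<lambda>k. u $ idx k) n)) k"
proof -
  define x where "x = (\<lambda>k. u $ idx k)"
  define g where "g = grad F \<phi> (rprod mul x n)"
  define G where "G = (\<chi> j. rprod_cofactor mul x n g (inv_into {1..n} idx j))"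
  have n: "n \<ge> 1"
    using k by simp
  have M_derivative: "((\<lambda>u. rprod mul (\<lambda>k. u $ idx k) n) has_derivative
          (\<lambda>v. rprod_deriv mul x (\<lambda>k. v $ idx k) n)) (at u)"
    unfolding x_def
    by (intro has_derivative_rprod[OF bilinear_conv_bounded_bilinear[THEN iffD1, OF bilinear_mul] n]
        bounded_linear_imp_has_derivative bounded_linear_vec_nth)
  have "((\<lambda>u. \<phi> (rprod mul (\<lambda>k. u $ idx k) n)) has_derivative
          (\<lambda>v. frechet_derivative \<phi> (at (rprod mul x n)) (rprod_deriv mul x (\<lambda>k. v $ idx k) n)))
        (at u)"
    using diff_chain_at[OF M_derivative \<phi>[unfolded frechet_derivative_works]]
    by (simp add: o_def x_def)
  then have derivative: "frechet_derivative (\<lambda>u. \<phi> (rprod mul (\<lambda>k. u $ idx k) n)) (at u) v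
      = F g (rprod_deriv mul x (\<lambda>k. v $ idx k) n)" for v
    using grad_represents_derivative[OF bilinear_form nondegenerate_form \<phi>]
    by (simp add: frechet_derivative_at[symmetric] g_def x_def)
  have "formN F G v = (\<Sum>k=1..n. F (rprod_cofactor mul x n g k) (v $ idx k))" for v
    unfolding formN_def sum.reindex_bij_betw[OF idx, symmetric] G_def
    using bij_betw_inv_into_left[OF idx] by (intro sum.cong) auto
  then have "grad (formN F) (\<lambda>u. \<phi> (rprod mul (\<lambda>k. u $ idx k) n)) u = G"
    by (intro grad_eqI bilinear_formN nondegenerate_formN bilinear_form nondegenerate_form)
      (simp add: derivative form_rprod_deriv[OF n])
  then show ?thesis
    unfolding gradN_def G_def g_def x_def using bij_betw_inv_into_left[OF idx k] by simp
qed

lemma PBN_comp_rprod: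
  fixes idx :: "nat \<Rightarrow> 'n::finite" and A B C D :: "'a^'n \<Rightarrow> 'a^'n"
  assumes idx: "bij_betw idx {1..n} UNIV"
    and \<phi>: "\<phi> differentiable (at (rprod mul (\<lambda>k. u $ idx k) n))"
    and \<psi>: "\<psi> differentiable (at (rprod mul (\<lambda>k. u $ idx k) n))"
  defines "z \<equiv> rprod_rotation mul (\<lambda>k. u $ idx k) n (grad F \<phi> (rprod mul (\<lambda>k. u $ idx k) n))"
    and "w \<equiv> rprod_rotation mul (\<lambda>k. u $ idx k) n (grad F \<psi> (rprod mul (\<lambda>k. u $ idx k) n))"
  shows "PBN mul F A B C D
        (\<lambda>u. \<phi> (rprod mul (\<lambda>k. u $ idx k) n)) (\<lambda>u. \<psi> (rprod mul (\<lambda>k. u $ idx k) n)) u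
    = (\<Sum>i=1..n. \<Sum>j=1..n.
          F (comp A (idx i) (idx j) (z (j-1))) (w (i-1)) - F (comp D (idx i) (idx j) (z j)) (w i)
        + F (comp B (idx i) (idx j) (z j)) (w (i-1)) - F (comp C (idx i) (idx j) (z (j-1))) (w i))"
proof -
  have dLN: "dLN mul F (\<lambda>u. \<theta> (rprod mul (\<lambda>k. u $ idx k) n)) u (idx k)
      = rprod_rotation mul (\<lambda>k. u $ idx k) n (grad F \<theta> (rprod mul (\<lambda>k. u $ idx k) n)) k"
    if "\<theta> differentiable (at (rprod mul (\<lambda>k. u $ idx k) n))" "k \<in> {1..n}" for \<theta> k
    using gradN_comp_rprod[OF idx that] that(2) by (simp add: dLN_def rprod_rotation_def)
  have dRN: "dRN mul F (\<lambda>u. \<theta> (rprod mul (\<lambda>k. u $ idx k) n)) u (idx k)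
      = rprod_rotation mul (\<lambda>k. u $ idx k) n (grad F \<theta> (rprod mul (\<lambda>k. u $ idx k) n)) (k - 1)"
    if "\<theta> differentiable (at (rprod mul (\<lambda>k. u $ idx k) n))" "k \<in> {1..n}" for \<theta> k
    using gradN_comp_rprod[OF idx that] mul_rprod_cofactor[OF mul_assoc, of k n "\<lambda>k. u $ idx k"]
      that(2)
    by (simp add: dRN_def)
  show ?thesis
    unfolding PBN_def sum.reindex_bij_betw[OF idx, symmetric]
    by (intro sum.cong refl) (simp add: dLN dRN \<phi> \<psi> z_def w_def)
qed

lemma PB_at_rprod:
  fixes x :: "nat \<Rightarrow> 'a" and \<phi> \<psi> :: "'a \<Rightarrow> real"
  assumes "n \<ge> 1"
  defines "z \<equiv> rprod_rotation mul x n (grad F \<phi> (rprod mul x n))"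
    and "w \<equiv> rprod_rotation mul x n (grad F \<psi> (rprod mul x n))"
  shows "PB mul F A B C D \<phi> \<psi> (rprod mul x n)
    = F (A (z 0)) (w 0) - F (D (z n)) (w n) + F (B (z n)) (w 0) - F (C (z 0)) (w n)"
  unfolding PB_def dL_def dR_def z_def w_def
  using rprod_rotation_last[OF mul_assoc assms(1)] by (simp add: rprod_rotation_def)

end

theorem proposition5:
  fixes mul :: "'a::euclidean_space \<Rightarrow> 'a \<Rightarrow> 'a"
    and F :: "'a \<Rightarrow> 'a \<Rightarrow> real"
    and n :: nat
    and idx :: "nat \<Rightarrow> 'n::finite"
    and A B C D :: "'a^'n \<Rightarrow> 'a^'n"
  assumes alg: "assoc_algebra_with_form mul F"
    and idx: "bij_betw idx {1..n} UNIV"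
    and lin: "linear A" "linear B" "linear C" "linear D"
    and adjA: "\<forall>i j. adj F (comp A i j) = (\<lambda>x. - comp A j i x)"
    and adjD: "\<forall>i j. adj F (comp D i j) = (\<lambda>x. - comp D j i x)"
    and adjB: "\<forall>i j. adj F (comp B i j) = comp C j i"
    and poisson: "poisson_bracket (PBN mul F A B C D)"
    and cond_i: "\<forall>i\<in>{1..n-1}. \<forall>j\<in>{1..n-1}. \<forall>x.
        comp A (idx (i+1)) (idx (j+1)) x - comp D (idx i) (idx j) x
      + comp B (idx (i+1)) (idx j) x - comp C (idx i) (idx (j+1)) x = 0"
    and cond_ii: "\<forall>j\<in>{1..n-1}. \<forall>x.
        comp A (idx 1) (idx (j+1)) x + comp B (idx 1) (idx j) x = 0"
    and cond_iii: "\<forall>j\<in>{1..n-1}. \<forall>x.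
        comp D (idx n) (idx j) x + comp C (idx n) (idx (j+1)) x = 0"
  shows "\<forall>\<phi> \<psi> :: 'a \<Rightarrow> real. smooth \<phi> \<and> smooth \<psi> \<longrightarrow>
     PBN mul F A B C D (\<lambda>u. \<phi> (rprod mul (\<lambda>k. u $ idx k) n)) (\<lambda>u. \<psi> (rprod mul (\<lambda>k. u $ idx k) n))
     = (\<lambda>u. PB mul F (comp A (idx 1) (idx 1)) (comp B (idx 1) (idx n))
                      (comp C (idx n) (idx 1)) (comp D (idx n) (idx n)) \<phi> \<psi>
                 (rprod mul (\<lambda>k. u $ idx k) n))"
proof (intro allI impI ext)
  interpret invariant_form_algebra mul F
    using alg by unfold_locales
  note form = bilinear_form nondegenerate_form form_commute
  fix \<phi> \<psi> :: "'a \<Rightarrow> real" and u :: "'a^'n"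
  assume "smooth \<phi> \<and> smooth \<psi>"
  then have diff: "\<phi> differentiable (at v)" "\<psi> differentiable (at v)" for v
    unfolding smooth_def by (metis Ck.simps(2))+
  have n: "n \<ge> 1"
    using idx by (cases n) (auto simp: bij_betw_def)
  have adjC: "adj F (comp C i j) = comp B j i" for i j
    using adjB adj_adj[OF form linear_comp[OF lin(2)]] by metis
  have cond_ii': "comp A (idx (j+1)) (idx 1) x = comp C (idx j) (idx 1) x" if "j \<in> {1..n-1}" for j x
    using adj_eq_neg_adj[OF form linear_comp[OF lin(2), of "idx 1" "idx j"],
        of "comp A (idx 1) (idx (j+1))"] cond_ii that adjA adjB by (simp add: fun_eq_iff)
  have cond_iii': "comp B (idx (j+1)) (idx n) x = comp D (idx j) (idx n) x" if "j \<in> {1..n-1}" for j x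
    using adj_eq_neg_adj[OF form linear_comp[OF lin(3), of "idx n" "idx (j+1)"],
        of "comp D (idx n) (idx j)"] cond_iii that adjD adjC by (simp add: fun_eq_iff)
  show "PBN mul F A B C D (\<lambda>u. \<phi> (rprod mul (\<lambda>k. u $ idx k) n)) (\<lambda>u. \<psi> (rprod mul (\<lambda>k. u $ idx k) n)) u
     = PB mul F (comp A (idx 1) (idx 1)) (comp B (idx 1) (idx n))
                      (comp C (idx n) (idx 1)) (comp D (idx n) (idx n)) \<phi> \<psi>
                 (rprod mul (\<lambda>k. u $ idx k) n)"
    unfolding PBN_comp_rprod[OF idx diff(1) diff(2)] PB_at_rprod[OF n]
    using cond_i cond_ii cond_ii' cond_iii cond_iii'
    by (intro bracket_double_sum_telescopes[OF bilinear_form n]) auto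
qed

end
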